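(* Let $\mathfrak{S}=(\mathcal{X},\mathsf{S},\gamma,(\Lambda_{a})_{a\in\mathcal{A}})$ be a spectral decomposition system for the Euclidean space $\mathfrak{H}$, and let $\varphi\colon\mathcal{X}\to\left]-\infty,+\infty\right]$ be $\mathsf{S}$-invariant. Then: (i) $\varphi\circ\gamma$ is convex if and only if $\varphi$ is convex; (ii) if $\varphi$ is proper, then $\varphi\circ\gamma\in\Gamma_0(\mathfrak{H})$ if and only if $\varphi\in\Gamma_0(\mathcal{X})$.
   Context: A Euclidean space is a finite-dimensional real inner product space; inner products are written $\langle\cdot,\cdot\rangle$ and norms $\|\cdot\|$. Let $\mathfrak{H}$ and $\mathcal{X}$ be Euclidean spaces, let $\mathsf{S}$ be a group acting on $\mathcal{X}$ by linear isometries, let $\gamma\colon\mathfrak{H}\to\mathcal{X}$, and let $(\Lambda_a)_{a\in\mathcal{A}}$ be a family of linear operators from $\mathcal{X}$ to $\mathfrak{H}$. The orbit of $x$ is $\mathsf{S}\cdot x=\{s\cdot x: s\in\mathsf{S}\}$; a map $f$ on $\mathcal{X}$ is $\mathsf{S}$-invariant if $f(s\cdot x)=f(x)$ for all $s\in\mathsf{S}$, $x\in\mathcal{X}$. The tuple is a spectral decomposition system for $\mathfrak{H}$ if: [A] every $\Lambda_a$ is an isometry; [B] there exists an $\mathsf{S}$-invariant $\tau\colon\mathcal{X}\to\mathcal{X}$ with $\tau(x)\in\mathsf{S}\cdot x$ for all $x$ and $\gamma\circ\Lambda_a=\tau$ for all $a$; [C] for every $X\in\mathfrak{H}$ there is $a$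 with $X=\Lambda_a\gamma(X)$; [D] $\langle X,Y\rangle\leq\langle\gamma(X),\gamma(Y)\rangle$ for all $X,Y\in\mathfrak{H}$. For a function $f$ on a Euclidean space, $\operatorname{dom}f=\{x: f(x)<+\infty\}$; $f$ is convex if $f(\alpha x+(1-\alpha)y)\leq\alpha f(x)+(1-\alpha)f(y)$ for all $x,y\in\operatorname{dom}f$, $\alpha\in\left]0,1\right[$; $f$ is proper if it never takes $-\infty$ and $\operatorname{dom}f\neq\varnothing$; $\Gamma_0(\mathcal{H})$ is the set of proper lower semicontinuous convex functions $\mathcal{H}\to\left]-\infty,+\infty\right]$. *)

theory Defs
  imports "HOL-Analysis.Analysis" "HOL-Algebra.Group_Action"
begin

definition lin_isometry :: "('a::real_normed_vector \<Rightarrow> 'b::real_normed_vector) \<Rightarrow> bool" where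
  "lin_isometry L \<longleftrightarrow> linear L \<and> (\<forall>x. norm (L x) = norm x)"

definition S_invariant :: "('g, 'm) monoid_scheme \<Rightarrow> ('g \<Rightarrow> 'x \<Rightarrow> 'x) \<Rightarrow> ('x \<Rightarrow> 'c) \<Rightarrow> bool" where
  "S_invariant G act f \<longleftrightarrow> (\<forall>s\<in>carrier G. \<forall>x. f (act s x) = f x)"

definition spectral_decomposition_system ::
  "('g, 'm) monoid_scheme \<Rightarrow> ('g \<Rightarrow> 'x::euclidean_space \<Rightarrow> 'x) \<Rightarrow> ('h::euclidean_space \<Rightarrow> 'x)
    \<Rightarrow> 'a set \<Rightarrow> ('a \<Rightarrow> 'x \<Rightarrow> 'h) \<Rightarrow> bool" where
  "spectral_decomposition_system G act \<gamma> A \<Lambda> \<longleftrightarrow>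
     group G \<and> group_action G UNIV act \<and> (\<forall>s\<in>carrier G. lin_isometry (act s)) \<and>
     (\<forall>a\<in>A. lin_isometry (\<Lambda> a)) \<and>
     (\<exists>\<tau>. S_invariant G act \<tau> \<and> (\<forall>x. \<tau> x \<in> orbit G act x) \<and> (\<forall>a\<in>A. \<gamma> \<circ> \<Lambda> a = \<tau>)) \<and>
     (\<forall>X. \<exists>a\<in>A. X = \<Lambda> a (\<gamma> X)) \<and>
     (\<forall>X Y. X \<bullet> Y \<le> \<gamma> X \<bullet> \<gamma> Y)"

definition econvex :: "('v::real_vector \<Rightarrow> ereal) \<Rightarrow> bool" where
  "econvex f \<longleftrightarrow> (\<forall>x y \<alpha>. f x < \<infinity> \<longrightarrow> f y < \<infinity> \<longrightarrow> 0 < \<alpha> \<longrightarrow> \<alpha> < 1 \<longrightarrow>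
      f (\<alpha> *\<^sub>R x + (1 - \<alpha>) *\<^sub>R y) \<le> ereal \<alpha> * f x + ereal (1 - \<alpha>) * f y)"

definition eproper :: "('v \<Rightarrow> ereal) \<Rightarrow> bool" where
  "eproper f \<longleftrightarrow> (\<forall>x. f x \<noteq> -\<infinity>) \<and> (\<exists>x. f x < \<infinity>)"

definition elsc :: "('v::topological_space \<Rightarrow> ereal) \<Rightarrow> bool" where
  "elsc f \<longleftrightarrow> (\<forall>x. f x \<le> Liminf (at x) f)"

definition Gamma0 :: "('v::real_normed_vector \<Rightarrow> ereal) \<Rightarrow> bool" where
  "Gamma0 f \<longleftrightarrow> eproper f \<and> elsc f \<and> econvex f"

end

theory Submission
  imports Defs
begin

text \<open>
  Composition with \<open>\<Lambda>\<^sub>a\<close> recovers \<open>\<phi>\<close> from \<open>\<phi> \<circ> \<gamma>\<close>, since \<open>\<gamma> (\<Lambda>\<^sub>a x) = \<tau> x\<close> lies in the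
  orbit of \<open>x\<close>; so convexity and lower semicontinuity pass from \<open>\<phi> \<circ> \<gamma>\<close> to \<open>\<phi>\<close>. Lower
  semicontinuity passes back because \<open>\<gamma>\<close> is nonexpansive. For convexity the key point is
  that, for every \<open>a\<close>, the vector \<open>\<Lambda>\<^sub>a\<^sup>* X\<close> lies in the convex hull of the orbit of \<open>\<gamma> X\<close>:
  the support function of the orbit of \<open>x\<close> is \<open>y \<mapsto> \<langle>\<tau> x, \<tau> y\<rangle>\<close>, and it dominates
  \<open>\<langle>\<Lambda>\<^sub>a\<^sup>* X, y\<rangle> = \<langle>X, \<Lambda>\<^sub>a y\<rangle> \<le> \<langle>\<gamma> X, \<tau> y\<rangle>\<close>. Hence \<open>\<phi> (\<Lambda>\<^sub>a\<^sup>* X) \<le> \<phi> (\<gamma> X)\<close> for convex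
  invariant \<open>\<phi>\<close>, and writing \<open>\<gamma> Z = \<Lambda>\<^sub>a\<^sup>* Z\<close> for a decomposition \<open>Z = \<Lambda>\<^sub>a (\<gamma> Z)\<close> turns
  convexity of \<open>\<phi>\<close> into convexity of \<open>\<phi> \<circ> \<gamma>\<close>.
\<close>

lemma lin_isometry_inner:
  assumes "lin_isometry L"
  shows "L x \<bullet> L y = x \<bullet> y"
proof -
  have lin: "linear L" and sq: "\<And>v. L v \<bullet> L v = v \<bullet> v"
    using assms unfolding lin_isometry_def by (auto simp: dot_square_norm)
  have "(L x + L y) \<bullet> (L x + L y) = (x + y) \<bullet> (x + y)"
    using sq[of "x + y"] lin by (simp add: linear_add)
  then show ?thesis
    using sq[of x] sq[of y] by (simp add: inner_add_left inner_add_right inner_commute)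
qed

lemma adjoint_lin_isometry_cancel:
  fixes L :: "'a::euclidean_space \<Rightarrow> 'b::euclidean_space"
  assumes "lin_isometry L"
  shows "adjoint L (L x) = x"
proof -
  have "linear L" using assms unfolding lin_isometry_def by blast
  then have "v \<bullet> adjoint L (L x) = v \<bullet> x" for v
    by (simp add: adjoint_works lin_isometry_inner[OF assms])
  then show ?thesis by (metis vector_eq_ldot)
qed

lemma econvex_comp_linear:
  assumes "econvex f" and "linear L"
  shows "econvex (f \<circ> L)"
  using assms unfolding econvex_def by (simp add: linear_add linear_scale)

lemma econvex_convex_sublevel:
  assumes "econvex f"
  shows "convex {x. f x \<le> c}"
proof (rule convexI)
  fix x y and p q :: real
  assume x: "x \<in> {x. f x \<le> c}" and y: "y \<in> {x. f x \<le> c}" and "0 \<le> p" "0 \<le> q" "p + q = 1"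
  then consider "p = 0" "q = 1" | "q = 0" "p = 1" | "0 < p" "p < 1" "q = 1 - p" by fastforce
  then show "p *\<^sub>R x + q *\<^sub>R y \<in> {x. f x \<le> c}"
  proof cases
    case 3
    show ?thesis
    proof (cases "c = \<infinity>")
      case False
      then have "f x < \<infinity>" "f y < \<infinity>" using x y by (auto simp: less_top)
      then have "f (p *\<^sub>R x + q *\<^sub>R y) \<le> ereal p * f x + ereal (1 - p) * f y"
        using assms 3 unfolding econvex_def by blast
      also have "\<dots> \<le> ereal p * c + ereal (1 - p) * c"
        using x y 3 by (intro add_mono ereal_mult_left_mono) auto
      also have "\<dots> = c"
        using 3 by (cases c) (auto simp: algebra_simps)
      finally show ?thesis by simp
    qed simp
  qed (use x y in auto)
qed

lemma econvex_le_on_convex_hull: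
  assumes "econvex f" and "\<And>z. z \<in> S \<Longrightarrow> f z \<le> c" and "u \<in> convex hull S"
  shows "f u \<le> c"
  using hull_minimal[of S "{x. f x \<le> c}" convex] econvex_convex_sublevel assms by blast

lemma elsc_comp_continuous:
  fixes f :: "'b::topological_space \<Rightarrow> ereal" and g :: "'a::topological_space \<Rightarrow> 'b"
  assumes "elsc f" and "continuous_on UNIV g"
  shows "elsc (f \<circ> g)"
  unfolding elsc_def le_Liminf_iff
proof (intro allI impI)
  fix x c
  assume "c < (f \<circ> g) x"
  then have "eventually (\<lambda>y. c < f y) (at (g x))"
    using assms(1) unfolding elsc_def le_Liminf_iff by auto
  with \<open>c < (f \<circ> g) x\<close> have "eventually (\<lambda>y. c < f y) (nhds (g x))"
    by (auto simp: eventually_at_filter elim: eventually_mono)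
  moreover have "filterlim g (nhds (g x)) (at x)"
    using assms(2) unfolding continuous_on_def by simp
  ultimately show "eventually (\<lambda>y. c < (f \<circ> g) y) (at x)"
    unfolding filterlim_iff comp_def by blast
qed

lemma mem_convex_hull_if_support_le:
  fixes S :: "'a::euclidean_space set"
  assumes "compact S" and "\<And>y. \<exists>z\<in>S. u \<bullet> y \<le> z \<bullet> y"
  shows "u \<in> convex hull S"
proof (rule ccontr)
  assume "u \<notin> convex hull S"
  moreover have "closed (convex hull S)"
    using assms(1) by (simp add: compact_convex_hull compact_imp_closed)
  ultimately obtain a b where "a \<bullet> u < b" and "\<forall>x\<in>convex hull S. b < a \<bullet> x"
    using separating_hyperplane_closed_point[OF convex_convex_hull] by blast
  moreover obtain z where "z \<in> S" and "u \<bullet> (-a) \<le> z \<bullet> (-a)"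
    using assms(2) by blast
  ultimately show False
    by (metis hull_inc inner_commute inner_minus_right neg_le_iff_le order.strict_trans not_le)
qed

text \<open>A point \<open>p\<close> of the closure satisfies \<open>\<langle>p, p\<rangle> \<le> \<langle>z\<^sub>0, p\<rangle>\<close> and \<open>\<parallel>p\<parallel> = \<parallel>z\<^sub>0\<parallel>\<close> for the
  maximiser \<open>z\<^sub>0\<close> of \<open>\<langle>-, p\<rangle>\<close>, which forces \<open>p = z\<^sub>0\<close>.\<close>

lemma closed_sphere_subset_if_support_attained:
  fixes S :: "'a::real_inner set"
  assumes on_sphere: "\<And>z. z \<in> S \<Longrightarrow> norm z = r"
    and attained: "\<And>p. \<exists>z\<^sub>0\<in>S. \<forall>z\<in>S. z \<bullet> p \<le> z\<^sub>0 \<bullet> p"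
  shows "closed S"
proof -
  have "p \<in> S" if p: "p \<in> closure S" for p
  proof -
    obtain z\<^sub>0 where z\<^sub>0: "z\<^sub>0 \<in> S" "\<forall>z\<in>S. z \<bullet> p \<le> z\<^sub>0 \<bullet> p"
      using attained by blast
    have "S \<subseteq> {z. z \<bullet> p \<le> z\<^sub>0 \<bullet> p \<and> norm z = r}"
      using z\<^sub>0 on_sphere by auto
    moreover have "closed {z. z \<bullet> p \<le> z\<^sub>0 \<bullet> p \<and> norm z = r}"
      by (intro closed_Collect_conj closed_Collect_le closed_Collect_eq continuous_intros)
    ultimately have "p \<bullet> p \<le> z\<^sub>0 \<bullet> p" and "norm p = norm z\<^sub>0"
      using p closure_minimal on_sphere[OF z\<^sub>0(1)] by blast+
    then have "(norm (p - z\<^sub>0))\<^sup>2 \<le> 0"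
      by (simp add: norm_eq power2_norm_eq_inner inner_diff_left inner_diff_right inner_commute)
    then show ?thesis
      using z\<^sub>0(1) by simp
  qed
  then show ?thesis
    using closure_subset_eq by blast
qed

locale spectral_decomposition =
  fixes G :: "('g, 'm) monoid_scheme"
    and act :: "'g \<Rightarrow> 'x::euclidean_space \<Rightarrow> 'x"
    and \<gamma> :: "'h::euclidean_space \<Rightarrow> 'x"
    and A :: "'a set"
    and \<Lambda> :: "'a \<Rightarrow> 'x \<Rightarrow> 'h"
    and \<tau> :: "'x \<Rightarrow> 'x"
  assumes action: "group_action G UNIV act"
    and act_isometry: "s \<in> carrier G \<Longrightarrow> lin_isometry (act s)"
    and Lambda_isometry: "a \<in> A \<Longrightarrow> lin_isometry (\<Lambda> a)"
    and tau_invariant: "s \<in> carrier G \<Longrightarrow> \<tau> (act s x) = \<tau> x"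
    and tau_orbit: "\<tau> x \<in> orbit G act x"
    and gamma_Lambda: "a \<in> A \<Longrightarrow> \<gamma> (\<Lambda> a x) = \<tau> x"
    and decomposition: "\<exists>a\<in>A. X = \<Lambda> a (\<gamma> X)"
    and inner_le_gamma: "X \<bullet> Y \<le> \<gamma> X \<bullet> \<gamma> Y"

lemma spectral_decomposition_systemE:
  assumes "spectral_decomposition_system G act \<gamma> A \<Lambda>"
  obtains \<tau> where "spectral_decomposition G act \<gamma> A \<Lambda> \<tau>"
proof -
  obtain \<tau> where "S_invariant G act \<tau>" "\<forall>x. \<tau> x \<in> orbit G act x" "\<forall>a\<in>A. \<gamma> \<circ> \<Lambda> a = \<tau>"
    using assms unfolding spectral_decomposition_system_def by blast
  with assms have "spectral_decomposition G act \<gamma> A \<Lambda> \<tau>"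
    unfolding spectral_decomposition_system_def spectral_decomposition_def S_invariant_def
    by (simp add: fun_eq_iff)
  then show thesis ..
qed

context spectral_decomposition
begin

lemma Lambda_linear: "a \<in> A \<Longrightarrow> linear (\<Lambda> a)"
  using Lambda_isometry unfolding lin_isometry_def by blast

lemma invariant_comp_gamma_Lambda:
  assumes "S_invariant G act f" and "a \<in> A"
  shows "(f \<circ> \<gamma>) \<circ> \<Lambda> a = f"
proof
  fix x
  obtain s where "s \<in> carrier G" and "\<tau> x = act s x"
    using tau_orbit[of x] unfolding orbit_def by blast
  then show "((f \<circ> \<gamma>) \<circ> \<Lambda> a) x = f x"
    using assms unfolding S_invariant_def by (simp add: gamma_Lambda)
qed

lemma gamma_eq_adjoint:
  assumes "a \<in> A" and "X = \<Lambda> a (\<gamma> X)"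
  shows "\<gamma> X = adjoint (\<Lambda> a) X"
  using adjoint_lin_isometry_cancel[OF Lambda_isometry[OF assms(1)]] assms(2) by metis

lemma norm_gamma: "norm (\<gamma> X) = norm X"
  using decomposition[of X] Lambda_isometry unfolding lin_isometry_def by metis

lemma dist_gamma_le: "dist (\<gamma> X) (\<gamma> Y) \<le> dist X Y"
proof -
  have "(norm (\<gamma> X - \<gamma> Y))\<^sup>2 = (norm (\<gamma> X))\<^sup>2 - 2 * (\<gamma> X \<bullet> \<gamma> Y) + (norm (\<gamma> Y))\<^sup>2"
    by (simp add: power2_norm_eq_inner inner_diff_left inner_diff_right inner_commute)
  also have "\<dots> \<le> (norm X)\<^sup>2 - 2 * (X \<bullet> Y) + (norm Y)\<^sup>2"
    using inner_le_gamma[of X Y] by (simp add: norm_gamma)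
  also have "\<dots> = (norm (X - Y))\<^sup>2"
    by (simp add: power2_norm_eq_inner inner_diff_left inner_diff_right inner_commute)
  finally show ?thesis
    unfolding dist_norm by (rule power2_le_imp_le) simp
qed

lemma continuous_on_gamma: "continuous_on UNIV \<gamma>"
  by (rule lipschitz_on_continuous_on[of 1]) (simp add: lipschitz_onI dist_gamma_le)

lemma tau_gamma: "\<tau> (\<gamma> X) = \<gamma> X"
  using decomposition[of X] gamma_Lambda by metis

lemma inner_le_tau: "x \<bullet> y \<le> \<tau> x \<bullet> \<tau> y"
proof -
  obtain a where "a \<in> A"
    using decomposition by blast
  then show ?thesis
    using inner_le_gamma[of "\<Lambda> a x" "\<Lambda> a y"]
    by (simp add: gamma_Lambda lin_isometry_inner[OF Lambda_isometry])
qed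

lemma act_inv_cancel:
  assumes "t \<in> carrier G"
  shows "inv\<^bsub>G\<^esub> t \<in> carrier G" and "act (inv\<^bsub>G\<^esub> t) (act t y) = y"
proof -
  have "group G"
    using group_hom.axioms(1)[OF group_action.group_hom[OF action]] .
  then show "inv\<^bsub>G\<^esub> t \<in> carrier G"
    using assms by (rule group.inv_closed)
  show "act (inv\<^bsub>G\<^esub> t) (act t y) = y"
    using group_action.orbit_sym_aux[OF action assms UNIV_I refl] .
qed

lemma norm_orbit: "z \<in> orbit G act x \<Longrightarrow> norm z = norm x"
  using act_isometry unfolding orbit_def lin_isometry_def by blast

lemma inner_orbit_le:
  assumes "z \<in> orbit G act x"
  shows "z \<bullet> y \<le> \<tau> x \<bullet> \<tau> y"
proof -
  obtain s where "s \<in> carrier G" and "z = act s x"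
    using assms unfolding orbit_def by blast
  then show ?thesis
    using inner_le_tau[of z y] by (simp add: tau_invariant)
qed

lemma inner_orbit_attained: "\<exists>z\<in>orbit G act x. z \<bullet> y = \<tau> x \<bullet> \<tau> y"
proof -
  obtain t where t: "t \<in> carrier G" and "\<tau> y = act t y"
    using tau_orbit[of y] unfolding orbit_def by blast
  let ?z = "act (inv\<^bsub>G\<^esub> t) (\<tau> x)"
  have "?z \<in> orbit G act (\<tau> x)"
    using act_inv_cancel(1)[OF t] unfolding orbit_def by blast
  then have "?z \<in> orbit G act x"
    using group_action.orbit_trans[OF action] tau_orbit by blast
  moreover have "?z \<bullet> y = \<tau> x \<bullet> \<tau> y"
    using lin_isometry_inner[OF act_isometry[OF act_inv_cancel(1)[OF t]], of "\<tau> x" "act t y"]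
    by (simp add: act_inv_cancel(2)[OF t] \<open>\<tau> y = act t y\<close>)
  ultimately show ?thesis by blast
qed

lemma compact_orbit: "compact (orbit G act x)"
proof -
  have "bounded (orbit G act x)"
    unfolding bounded_iff using norm_orbit by fastforce
  moreover have "closed (orbit G act x)"
  proof (rule closed_sphere_subset_if_support_attained)
    show "norm z = norm x" if "z \<in> orbit G act x" for z
      using norm_orbit that .
    show "\<exists>z\<^sub>0\<in>orbit G act x. \<forall>z\<in>orbit G act x. z \<bullet> p \<le> z\<^sub>0 \<bullet> p" for p
    proof -
      obtain z\<^sub>0 where "z\<^sub>0 \<in> orbit G act x" and "z\<^sub>0 \<bullet> p = \<tau> x \<bullet> \<tau> p"
        using inner_orbit_attained by blast
      moreover have "\<forall>z\<in>orbit G act x. z \<bullet> p \<le> z\<^sub>0 \<bullet> p"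
        using inner_orbit_le \<open>z\<^sub>0 \<bullet> p = \<tau> x \<bullet> \<tau> p\<close> by simp
      ultimately show ?thesis by blast
    qed
  qed
  ultimately show ?thesis
    by (simp add: compact_eq_bounded_closed)
qed

lemma adjoint_Lambda_mem_convex_hull_orbit:
  assumes "a \<in> A"
  shows "adjoint (\<Lambda> a) X \<in> convex hull (orbit G act (\<gamma> X))"
proof (rule mem_convex_hull_if_support_le[OF compact_orbit])
  fix y
  have "adjoint (\<Lambda> a) X \<bullet> y = X \<bullet> \<Lambda> a y"
    by (simp add: adjoint_clauses(2) Lambda_linear[OF assms])
  also have "\<dots> \<le> \<tau> (\<gamma> X) \<bullet> \<tau> y"
    using inner_le_gamma[of X "\<Lambda> a y"] by (simp add: gamma_Lambda[OF assms] tau_gamma)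
  finally have "adjoint (\<Lambda> a) X \<bullet> y \<le> \<tau> (\<gamma> X) \<bullet> \<tau> y" .
  moreover obtain z where "z \<in> orbit G act (\<gamma> X)" and "z \<bullet> y = \<tau> (\<gamma> X) \<bullet> \<tau> y"
    using inner_orbit_attained by blast
  ultimately show "\<exists>z\<in>orbit G act (\<gamma> X). adjoint (\<Lambda> a) X \<bullet> y \<le> z \<bullet> y"
    by metis
qed

lemma econvex_invariant_adjoint_Lambda_le:
  assumes "econvex f" and "S_invariant G act f" and "a \<in> A"
  shows "f (adjoint (\<Lambda> a) X) \<le> f (\<gamma> X)"
proof (rule econvex_le_on_convex_hull[OF assms(1)])
  show "f z \<le> f (\<gamma> X)" if "z \<in> orbit G act (\<gamma> X)" for z
    using that assms(2) unfolding orbit_def S_invariant_def by auto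
qed (rule adjoint_Lambda_mem_convex_hull_orbit[OF assms(3)])

lemma econvex_comp_gamma_iff:
  assumes "S_invariant G act f"
  shows "econvex (f \<circ> \<gamma>) \<longleftrightarrow> econvex f"
proof
  obtain a where "a \<in> A"
    using decomposition by blast
  assume "econvex (f \<circ> \<gamma>)"
  then have "econvex ((f \<circ> \<gamma>) \<circ> \<Lambda> a)"
    using Lambda_linear[OF \<open>a \<in> A\<close>] by (rule econvex_comp_linear)
  then show "econvex f"
    by (simp only: invariant_comp_gamma_Lambda[OF assms \<open>a \<in> A\<close>])
next
  assume convex: "econvex f"
  show "econvex (f \<circ> \<gamma>)"
    unfolding econvex_def
  proof (intro allI impI)
    fix X Y and \<alpha> :: real
    assume "(f \<circ> \<gamma>) X < \<infinity>" "(f \<circ> \<gamma>) Y < \<infinity>" "0 < \<alpha>" "\<alpha> < 1"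
    define Z where "Z = \<alpha> *\<^sub>R X + (1 - \<alpha>) *\<^sub>R Y"
    obtain a where a: "a \<in> A" and "Z = \<Lambda> a (\<gamma> Z)"
      using decomposition by blast
    let ?L = "adjoint (\<Lambda> a)"
    have le_X: "f (?L X) \<le> f (\<gamma> X)" and le_Y: "f (?L Y) \<le> f (\<gamma> Y)"
      using econvex_invariant_adjoint_Lambda_le[OF convex assms a] by auto
    have "\<gamma> Z = \<alpha> *\<^sub>R ?L X + (1 - \<alpha>) *\<^sub>R ?L Y"
      using gamma_eq_adjoint[OF a \<open>Z = \<Lambda> a (\<gamma> Z)\<close>] adjoint_linear[OF Lambda_linear[OF a]]
      unfolding Z_def by (simp add: linear_add linear_scale)
    moreover have "f (?L X) < \<infinity>" and "f (?L Y) < \<infinity>"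
      using le_X le_Y \<open>(f \<circ> \<gamma>) X < \<infinity>\<close> \<open>(f \<circ> \<gamma>) Y < \<infinity>\<close> by auto
    ultimately have "f (\<gamma> Z) \<le> ereal \<alpha> * f (?L X) + ereal (1 - \<alpha>) * f (?L Y)"
      using convex \<open>0 < \<alpha>\<close> \<open>\<alpha> < 1\<close> unfolding econvex_def by simp
    also have "\<dots> \<le> ereal \<alpha> * f (\<gamma> X) + ereal (1 - \<alpha>) * f (\<gamma> Y)"
      using le_X le_Y \<open>0 < \<alpha>\<close> \<open>\<alpha> < 1\<close> by (intro add_mono ereal_mult_left_mono) auto
    finally show "(f \<circ> \<gamma>) (\<alpha> *\<^sub>R X + (1 - \<alpha>) *\<^sub>R Y) \<le> ereal \<alpha> * (f \<circ> \<gamma>) X + ereal (1 - \<alpha>) * (f \<circ> \<gamma>) Y"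
      unfolding Z_def by simp
  qed
qed

lemma elsc_comp_gamma_iff:
  assumes "S_invariant G act f"
  shows "elsc (f \<circ> \<gamma>) \<longleftrightarrow> elsc f"
proof
  obtain a where "a \<in> A"
    using decomposition by blast
  assume "elsc (f \<circ> \<gamma>)"
  moreover have "continuous_on UNIV (\<Lambda> a)"
    using Lambda_linear[OF \<open>a \<in> A\<close>] by (simp add: linear_continuous_on linear_conv_bounded_linear)
  ultimately have "elsc ((f \<circ> \<gamma>) \<circ> \<Lambda> a)"
    by (rule elsc_comp_continuous)
  then show "elsc f"
    by (simp only: invariant_comp_gamma_Lambda[OF assms \<open>a \<in> A\<close>])
next
  assume "elsc f"
  then show "elsc (f \<circ> \<gamma>)"
    using continuous_on_gamma by (rule elsc_comp_continuous)
qed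

lemma eproper_comp_gamma_iff:
  assumes "S_invariant G act f"
  shows "eproper (f \<circ> \<gamma>) \<longleftrightarrow> eproper f"
proof -
  obtain a where "a \<in> A"
    using decomposition by blast
  then have "f x = f (\<gamma> (\<Lambda> a x))" for x
    using invariant_comp_gamma_Lambda[OF assms] by (metis comp_apply)
  then show ?thesis
    unfolding eproper_def comp_apply by metis
qed

end

theorem theorem4p6:
  fixes G :: "('g, 'm) monoid_scheme"
    and act :: "'g \<Rightarrow> 'x::euclidean_space \<Rightarrow> 'x"
    and \<gamma> :: "'h::euclidean_space \<Rightarrow> 'x"
    and A :: "'a set"
    and \<Lambda> :: "'a \<Rightarrow> 'x \<Rightarrow> 'h"
    and \<phi> :: "'x \<Rightarrow> ereal"
  assumes "spectral_decomposition_system G act \<gamma> A \<Lambda>"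
    and "\<forall>x. \<phi> x \<noteq> -\<infinity>"
    and "S_invariant G act \<phi>"
  shows "(econvex (\<phi> \<circ> \<gamma>) \<longleftrightarrow> econvex \<phi>) \<and>
         (eproper \<phi> \<longrightarrow> (Gamma0 (\<phi> \<circ> \<gamma>) \<longleftrightarrow> Gamma0 \<phi>))"
proof -
  obtain \<tau> where "spectral_decomposition G act \<gamma> A \<Lambda> \<tau>"
    using assms(1) by (rule spectral_decomposition_systemE)
  then interpret spectral_decomposition G act \<gamma> A \<Lambda> \<tau> .
  have "econvex (\<phi> \<circ> \<gamma>) \<longleftrightarrow> econvex \<phi>"
    using assms(3) by (rule econvex_comp_gamma_iff)
  moreover have "Gamma0 (\<phi> \<circ> \<gamma>) \<longleftrightarrow> Gamma0 \<phi>"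
    unfolding Gamma0_def using calculation assms(3)
    by (simp add: eproper_comp_gamma_iff elsc_comp_gamma_iff)
  ultimately show ?thesis by blast
qed

end
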